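(* Let $R$ be a generalized weakly Rickart $*$-ring. Then (1) for each $x\in R$ there exists $n\in\mathbb N$ such that $r(x^n)\cap (x^* )^nR=\{0\}$; and (2) the involution $*$ is weakly proper.
   Context: A $*$-ring is an associative ring $R$ with an involution $x\mapsto x^*$ (additive, $(xy)^*=y^*x^*$, $x^{**}=x$). A projection is an element $e$ with $e=e^*=e^2$. For $a\in R$, $r(a)=\{b\in R: ab=0\}$. A projection $e$ is a generalized right projection of $x$ if there exists $n\in\mathbb N$ with $x^ne=x^n$ and, for all $y\in R$, $x^ny=0$ implies $ey=0$. $R$ is a generalized weakly Rickart $*$-ring if every element has a generalized right projection. The involution is weakly proper if for every $x\in R$, $xx^*=0$ implies $x^n=0$ for some $n\in\mathbb N$. *)

theory Defs
  imports Main
begin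

(* Positive powers in a possibly non-unital ring: ppow x n = x^n for n >= 1
   (the value at n = 0 is irrelevant and never used). *)
fun ppow :: "'a::ring \<Rightarrow> nat \<Rightarrow> 'a" where
  "ppow x 0 = 0"
| "ppow x (Suc 0) = x"
| "ppow x (Suc (Suc n)) = ppow x (Suc n) * x"

definition star_ring :: "('a::ring \<Rightarrow> 'a) \<Rightarrow> bool" where
  "star_ring s \<longleftrightarrow> (\<forall>x y. s (x + y) = s x + s y) \<and> (\<forall>x y. s (x * y) = s y * s x)
     \<and> (\<forall>x. s (s x) = x)"

definition projection :: "('a::ring \<Rightarrow> 'a) \<Rightarrow> 'a \<Rightarrow> bool" where
  "projection s e \<longleftrightarrow> e = s e \<and> e = e * e"

definition rann :: "'a::ring \<Rightarrow> 'a set" where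
  "rann a = {b. a * b = 0}"

definition gen_right_projection :: "('a::ring \<Rightarrow> 'a) \<Rightarrow> 'a \<Rightarrow> 'a \<Rightarrow> bool" where
  "gen_right_projection s e x \<longleftrightarrow> projection s e \<and>
     (\<exists>n\<ge>1. ppow x n * e = ppow x n \<and> (\<forall>y. ppow x n * y = 0 \<longrightarrow> e * y = 0))"

definition gen_weakly_rickart :: "('a::ring \<Rightarrow> 'a) \<Rightarrow> bool" where
  "gen_weakly_rickart s \<longleftrightarrow> star_ring s \<and> (\<forall>x. \<exists>e. gen_right_projection s e x)"

definition weakly_proper :: "('a::ring \<Rightarrow> 'a) \<Rightarrow> bool" where
  "weakly_proper s \<longleftrightarrow> (\<forall>x. x * s x = 0 \<longrightarrow> (\<exists>n\<ge>1. ppow x n = 0))"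

end

theory Submission
  imports Defs
begin

(* Let e be a generalized right projection of x, with exponent n.  Applying the involution s to
   x^n e = x^n gives e (s x)^n = (s x)^n, so e fixes (s x)^n R; since e also kills r(x^n), the
   two meet only in 0.  If x (s x) = 0, then x^n (s x) = 0, hence e (s x) = 0, i.e. x e = 0, and
   therefore x^n = x^n e = 0. *)

lemma ppow_commute: "x * ppow x n = ppow x n * (x::'a::ring)"
  by (induction x n rule: ppow.induct) (simp_all add: mult.assoc[symmetric])

lemma ppow_mult_eq_0: "x * y = 0 \<Longrightarrow> n \<ge> 1 \<Longrightarrow> ppow x n * y = (0::'a::ring)"
  by (induction x n rule: ppow.induct) (simp_all add: mult.assoc)

lemma star_ring_zero: "star_ring s \<Longrightarrow> s 0 = 0"
  unfolding star_ring_def by (metis add_cancel_right_right add_0)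

lemma star_ring_ppow:
  assumes "star_ring s"
  shows "s (ppow x n) = ppow (s x) n"
proof (induction x n rule: ppow.induct)
  case (1 x)
  show ?case using assms by (simp add: star_ring_zero)
next
  case (2 x)
  show ?case by simp
next
  case (3 x n)
  have "s (ppow x (Suc (Suc n))) = s x * s (ppow x (Suc n))"
    using assms by (simp add: star_ring_def)
  also have "\<dots> = ppow (s x) (Suc (Suc n))"
    using 3 by (simp add: ppow_commute)
  finally show ?case .
qed

lemma projection_mult_star_ppow:
  assumes "star_ring s" and "projection s e" and "ppow x n * e = ppow x n"
  shows "e * ppow (s x) n = ppow (s x) n"
proof -
  have "s (ppow x n * e) = s (ppow x n)"
    using assms(3) by simp
  then show ?thesis
    using assms(1,2) by (simp add: star_ring_def projection_def star_ring_ppow)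
qed

lemma gen_right_projection_rann_inter_range:
  assumes "star_ring s" and "gen_right_projection s e x"
  shows "\<exists>n\<ge>1. rann (ppow x n) \<inter> {ppow (s x) n * z | z. True} = {0}"
proof -
  obtain n where n: "n \<ge> 1" and fix_x: "ppow x n * e = ppow x n"
    and kills: "\<And>y. ppow x n * y = 0 \<Longrightarrow> e * y = 0" and proj: "projection s e"
    using assms(2) unfolding gen_right_projection_def by blast
  have fix_sx: "e * ppow (s x) n = ppow (s x) n"
    using projection_mult_star_ppow[OF assms(1) proj fix_x] .
  have "w = 0" if "ppow x n * w = 0" and "w = ppow (s x) n * z" for w z
  proof -
    have "w = e * w"
      using fix_sx that(2) by (simp add: mult.assoc[symmetric])
    also have "\<dots> = 0"
      using kills that(1) by blast
    finally show ?thesis .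
  qed
  then have "rann (ppow x n) \<inter> {ppow (s x) n * z | z. True} = {0}"
    by (auto simp: rann_def intro!: exI[of _ 0])
  then show ?thesis
    using n by blast
qed

lemma gen_right_projection_nilpotent:
  assumes "star_ring s" and "gen_right_projection s e x" and "x * s x = 0"
  shows "\<exists>n\<ge>1. ppow x n = 0"
proof -
  obtain n where n: "n \<ge> 1" and fix_x: "ppow x n * e = ppow x n"
    and kills: "\<And>y. ppow x n * y = 0 \<Longrightarrow> e * y = 0" and proj: "projection s e"
    using assms(2) unfolding gen_right_projection_def by blast
  have "e * s x = 0"
    using kills ppow_mult_eq_0[OF assms(3) n] by blast
  then have "s (e * s x) = 0"
    using assms(1) by (simp add: star_ring_zero)
  then have "x * e = 0"
    using assms(1) proj by (simp add: star_ring_def projection_def)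
  then have "ppow x n * e = 0"
    using ppow_mult_eq_0 n by blast
  then show ?thesis
    using fix_x n by auto
qed

theorem mainTheorem10:
  fixes s :: "'a::ring \<Rightarrow> 'a"
  assumes "gen_weakly_rickart s"
  shows "(\<forall>x. \<exists>n\<ge>1. rann (ppow x n) \<inter> {ppow (s x) n * z | z. True} = {0})
         \<and> weakly_proper s"
proof -
  have star: "star_ring s" and proj: "\<And>x. \<exists>e. gen_right_projection s e x"
    using assms by (simp_all add: gen_weakly_rickart_def)
  show ?thesis
    unfolding weakly_proper_def
    using gen_right_projection_rann_inter_range[OF star] gen_right_projection_nilpotent[OF star] proj
    by meson
qed

end
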